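(* Let $P=\{x\in\mathbb{R}^n:\tilde A x+\tilde b\ge 0\}$ be a polyhedron (with $\tilde A\in\mathbb{R}^{p\times n}$, $\tilde b\in\mathbb{R}^p$) having at least two non-parallel linear boundaries, i.e. its boundary contains facets lying in two non-parallel hyperplanes. Then the indicator function $\mathbb{1}_P$ cannot be expressed on $\mathbb{R}^n$ by any discrete-time LIF-SNN with a single time step ($T=1$) and only one hidden (spike) layer ($L=1$), neither with spike output nor with membrane potential output.
   Context: With $T=1$, $L=1$, direct encoding and input $x\in\mathbb{R}^n$, a discrete-time LIF-SNN computes the spike vector $s^1=H(Wx+b')$ for some $W\in\mathbb{R}^{m\times n}$, $b'\in\mathbb{R}^m$ (the bias absorbing the initial potential and threshold terms), where $H$ is the entrywise Heaviside function ($H(z)=1$ iff $z\ge 0$). With spike output (which requires $m=1$) the realization is $x\mapsto H(\langle w,x\rangle+b')$; with membrane potential output the realization is $x\mapsto w_0+\sum_{i=1}^m v_i H(\langle w_i,x\rangle+b'_i)$ for arbitrary $w_0,v_1,\dots,v_m\in\mathbb{R}$. The indicator function $\mathbb{1}_P$ equals $1$ on $P$ and $0$ on $\mathbb{R}^n\setminus P$. *)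

theory Defs
  imports "HOL-Analysis.Analysis"
begin

definition heaviside :: "real \<Rightarrow> real" where
  "heaviside z = (if z \<ge> 0 then 1 else 0)"

definition polyhedron_of :: "real^'n^'p \<Rightarrow> real^'p \<Rightarrow> (real^'n) set" where
  "polyhedron_of A b = {x. \<forall>i. (A *v x + b) $ i \<ge> 0}"

definition has_two_nonparallel_boundaries :: "(real^'n) set \<Rightarrow> bool" where
  "has_two_nonparallel_boundaries P \<longleftrightarrow>
     (\<exists>F1 F2 a1 c1 a2 c2.
        F1 facet_of P \<and> F2 facet_of P \<and> F1 \<subseteq> frontier P \<and> F2 \<subseteq> frontier P \<and>
        a1 \<noteq> 0 \<and> a2 \<noteq> 0 \<and>
        affine hull F1 = {x. a1 \<bullet> x = c1} \<and> affine hull F2 = {x. a2 \<bullet> x = c2} \<and>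
        \<not> (\<exists>k. a2 = k *\<^sub>R a1))"

text \<open>Realization of a LIF-SNN with T = 1, L = 1, direct encoding, spike output
  (one output spike neuron): x |-> H(<w,x> + b').\<close>
definition snn_T1L1_spike_realizable :: "(real^'n \<Rightarrow> real) \<Rightarrow> bool" where
  "snn_T1L1_spike_realizable f \<longleftrightarrow>
     (\<exists>w b'. \<forall>x. f x = heaviside (w \<bullet> x + b'))"

text \<open>Realization with membrane potential output:
  x |-> w0 + sum_{i<m} v_i H(<w_i,x> + b'_i), hidden width m arbitrary.\<close>
definition snn_T1L1_membrane_realizable :: "(real^'n \<Rightarrow> real) \<Rightarrow> bool" where
  "snn_T1L1_membrane_realizable f \<longleftrightarrow>
     (\<exists>(m::nat) (W::nat \<Rightarrow> real^'n) (b'::nat \<Rightarrow> real) (w0::real) (v::nat \<Rightarrow> real).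
        \<forall>x. f x = w0 + (\<Sum>i<m. v i * heaviside (W i \<bullet> x + b' i)))"

end

theory Submission
  imports Defs
begin

(* A membrane-potential realisation f = w0 + sum_i v_i H(<w_i,x> + b_i) can only jump across the
   hyperplanes <w_i,x> = -b_i, so along any line L its jump in a direction a,
   lim_{eps -> 0+} f(x + eps a) - f(x - eps a), takes one and the same value at all but finitely
   many points x of L.  For the indicator of P take L inside the hyperplane of one facet, with
   normal a.  Near a relative interior point of the facet, P is locally a half-space bounded by that
   hyperplane, so the jump is +-1.  The second, non-parallel facet prevents the hyperplane from lying
   inside P, so L leaves P; beyond its exit point both sides lie outside the closed convex set P and
   the jump is 0.  Spike output is the special case of a single hidden neuron. *)

definition central_difference :: "('a::real_vector \<Rightarrow> real) \<Rightarrow> 'a \<Rightarrow> 'a \<Rightarrow> real \<Rightarrow> real" where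
  "central_difference f x a \<epsilon> = f (x + \<epsilon> *\<^sub>R a) - f (x - \<epsilon> *\<^sub>R a)"

lemma eventually_at_within_if_eventually_cofinite:
  fixes x :: "'a::t1_space"
  assumes "eventually P cofinite"
  shows "eventually P (at x within S)"
proof -
  have "\<not> x islimpt {y. \<not> P y}"
    using assms by (simp add: eventually_cofinite islimpt_finite)
  then have "eventually P (at x)"
    by (simp add: islimpt_iff_eventually)
  then show ?thesis
    by (metis at_le filter_leD subset_UNIV)
qed

lemma eventually_heaviside_central_difference:
  fixes g t :: real
  shows "\<forall>\<^sub>F \<epsilon> in at_right 0. heaviside (g + \<epsilon> * t) - heaviside (g - \<epsilon> * t) =
           (if g = 0 then heaviside t - heaviside (- t) else 0)"
proof (cases "g = 0")
  case True
  have "heaviside (\<epsilon> * t) = heaviside t" "heaviside (- (\<epsilon> * t)) = heaviside (- t)" if "\<epsilon> > 0" for \<epsilon>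
    using that by (auto simp: heaviside_def zero_le_mult_iff mult_le_0_iff)
  then show ?thesis
    using True eventually_at_right_less[of 0] by (auto elim!: eventually_mono)
next
  case False
  have "((\<lambda>\<epsilon>. \<epsilon> * \<bar>t\<bar>) \<longlongrightarrow> 0) (at_right 0)"
    by (auto intro!: tendsto_eq_intros)
  then have "\<forall>\<^sub>F \<epsilon> in at_right 0. \<epsilon> * \<bar>t\<bar> < \<bar>g\<bar>"
    using False by (intro order_tendstoD(2)) auto
  then have "\<forall>\<^sub>F \<epsilon> in at_right 0. \<epsilon> > 0 \<and> \<epsilon> * \<bar>t\<bar> < \<bar>g\<bar>"
    using eventually_at_right_less[of 0] by eventually_elim auto
  then show ?thesis
  proof eventually_elim
    case (elim \<epsilon>)
    then have "\<bar>\<epsilon> * t\<bar> < \<bar>g\<bar>"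
      by (simp add: abs_mult)
    then show ?case
      using False by (auto simp: heaviside_def)
  qed
qed

lemma eventually_heaviside_central_difference_on_line:
  fixes w y d a :: "'a::real_inner"
  shows "\<forall>\<^sub>F s in cofinite. \<forall>\<^sub>F \<epsilon> in at_right 0.
           central_difference (\<lambda>x. heaviside (w \<bullet> x + \<beta>)) (y + s *\<^sub>R d) a \<epsilon> =
           (if w \<bullet> d = 0 \<and> w \<bullet> y + \<beta> = 0 then heaviside (w \<bullet> a) - heaviside (- (w \<bullet> a)) else 0)"
proof -
  have "finite {s. w \<bullet> y + \<beta> + s * (w \<bullet> d) = 0 \<and> \<not> (w \<bullet> d = 0 \<and> w \<bullet> y + \<beta> = 0)}"
  proof (cases "w \<bullet> d = 0")
    case False
    then have "{s. w \<bullet> y + \<beta> + s * (w \<bullet> d) = 0 \<and> \<not> (w \<bullet> d = 0 \<and> w \<bullet> y + \<beta> = 0)} \<subseteq>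
                 {- (w \<bullet> y + \<beta>) / (w \<bullet> d)}"
      by (auto simp: field_simps)
    then show ?thesis
      using finite_subset by blast
  qed simp
  then have "\<forall>\<^sub>F s in cofinite. w \<bullet> y + \<beta> + s * (w \<bullet> d) = 0 \<longrightarrow> w \<bullet> d = 0 \<and> w \<bullet> y + \<beta> = 0"
    unfolding eventually_cofinite by (simp only: not_imp)
  then show ?thesis
  proof (rule eventually_mono)
    fix s
    assume "w \<bullet> y + \<beta> + s * (w \<bullet> d) = 0 \<longrightarrow> w \<bullet> d = 0 \<and> w \<bullet> y + \<beta> = 0"
    then show "\<forall>\<^sub>F \<epsilon> in at_right 0. central_difference (\<lambda>x. heaviside (w \<bullet> x + \<beta>)) (y + s *\<^sub>R d) a \<epsilon> =
           (if w \<bullet> d = 0 \<and> w \<bullet> y + \<beta> = 0 then heaviside (w \<bullet> a) - heaviside (- (w \<bullet> a)) else 0)"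
      using eventually_heaviside_central_difference[of "w \<bullet> y + \<beta> + s * (w \<bullet> d)" "w \<bullet> a"]
      by (auto simp: central_difference_def algebra_simps
               elim!: eventually_mono)
  qed
qed

lemma membrane_realizable_central_difference_const:
  fixes f :: "real^'n \<Rightarrow> real"
  assumes "snn_T1L1_membrane_realizable f"
  shows "\<exists>C. \<forall>\<^sub>F s in cofinite. \<forall>\<^sub>F \<epsilon> in at_right 0. central_difference f (y + s *\<^sub>R d) a \<epsilon> = C"
proof -
  obtain m :: nat and W \<beta> w0 v where f: "f = (\<lambda>x. w0 + (\<Sum>i<m. v i * heaviside (W i \<bullet> x + \<beta> i)))"
    using assms unfolding snn_T1L1_membrane_realizable_def fun_eq_iff[symmetric] by blast
  have f_diff: "central_difference f x a \<epsilon> =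
      (\<Sum>i<m. v i * central_difference (\<lambda>x. heaviside (W i \<bullet> x + \<beta> i)) x a \<epsilon>)" for x \<epsilon>
    by (simp add: f central_difference_def sum_subtractf right_diff_distrib)
  define jump where "jump i = (if W i \<bullet> d = 0 \<and> W i \<bullet> y + \<beta> i = 0
    then heaviside (W i \<bullet> a) - heaviside (- (W i \<bullet> a)) else 0)" for i
  have "\<forall>\<^sub>F s in cofinite. \<forall>i\<in>{..<m}. \<forall>\<^sub>F \<epsilon> in at_right 0.
          central_difference (\<lambda>x. heaviside (W i \<bullet> x + \<beta> i)) (y + s *\<^sub>R d) a \<epsilon> = jump i"
    unfolding jump_def
    by (intro eventually_ball_finite ballI eventually_heaviside_central_difference_on_line) auto
  then have "\<forall>\<^sub>F s in cofinite. \<forall>\<^sub>F \<epsilon> in at_right 0.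
          central_difference f (y + s *\<^sub>R d) a \<epsilon> = (\<Sum>i<m. v i * jump i)"
  proof (rule eventually_mono)
    fix s
    assume "\<forall>i\<in>{..<m}. \<forall>\<^sub>F \<epsilon> in at_right 0.
          central_difference (\<lambda>x. heaviside (W i \<bullet> x + \<beta> i)) (y + s *\<^sub>R d) a \<epsilon> = jump i"
    then have "\<forall>\<^sub>F \<epsilon> in at_right 0. \<forall>i\<in>{..<m}.
          central_difference (\<lambda>x. heaviside (W i \<bullet> x + \<beta> i)) (y + s *\<^sub>R d) a \<epsilon> = jump i"
      by (intro eventually_ball_finite) auto
    then show "\<forall>\<^sub>F \<epsilon> in at_right 0. central_difference f (y + s *\<^sub>R d) a \<epsilon> = (\<Sum>i<m. v i * jump i)"
      by (rule eventually_mono) (simp add: f_diff)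
  qed
  then show ?thesis
    by blast
qed

lemma spike_realizable_imp_membrane_realizable:
  assumes "snn_T1L1_spike_realizable f"
  shows "snn_T1L1_membrane_realizable f"
proof -
  obtain w \<beta> where "\<forall>x. f x = heaviside (w \<bullet> x + \<beta>)"
    using assms unfolding snn_T1L1_spike_realizable_def by blast
  then show ?thesis
    unfolding snn_T1L1_membrane_realizable_def
    by (intro exI[of _ "1::nat"] exI[of _ "\<lambda>_. w"] exI[of _ "\<lambda>_. \<beta>"] exI[of _ 0] exI[of _ "\<lambda>_. 1"])
      simp
qed

lemma vanishes_on_orthogonal_complement_imp_parallel:
  fixes a w :: "'a::real_inner"
  assumes "a \<noteq> 0" "\<forall>u. a \<bullet> u = 0 \<longrightarrow> w \<bullet> u = 0"
  shows "\<exists>k. w = k *\<^sub>R a"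
proof -
  define k where "k = (w \<bullet> a) / (a \<bullet> a)"
  have ortho: "a \<bullet> (w - k *\<^sub>R a) = 0"
    using assms(1) by (simp add: k_def inner_diff_right inner_commute)
  then have "w \<bullet> (w - k *\<^sub>R a) = 0"
    using assms(2) by blast
  with ortho have "(w - k *\<^sub>R a) \<bullet> (w - k *\<^sub>R a) = 0"
    by (simp add: inner_diff_left)
  then show ?thesis
    by auto
qed

lemma nonneg_near_point_on_hyperplane_imp_multiple:
  fixes a w y0 :: "'a::real_inner"
  assumes "a \<noteq> 0" "r > 0" "a \<bullet> y0 = c" "w \<bullet> y0 + \<beta> = 0"
    and nonneg: "\<And>x. a \<bullet> x = c \<Longrightarrow> dist x y0 < r \<Longrightarrow> w \<bullet> x + \<beta> \<ge> 0"
  shows "\<exists>\<mu>. \<forall>x. w \<bullet> x + \<beta> = \<mu> * (a \<bullet> x - c)"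
proof -
  have "w \<bullet> u = 0" if "a \<bullet> u = 0" for u
  proof (cases "u = 0")
    case False
    define t where "t = r / (2 * norm u)"
    have "t > 0" "dist (y0 + t *\<^sub>R u) y0 < r" "dist (y0 + (- t) *\<^sub>R u) y0 < r"
      using assms(2) False by (simp_all add: t_def dist_norm)
    moreover have "a \<bullet> (y0 + t *\<^sub>R u) = c" "a \<bullet> (y0 + (- t) *\<^sub>R u) = c"
      using assms(3) that by (simp_all add: inner_add_right inner_diff_right)
    ultimately have "w \<bullet> (y0 + t *\<^sub>R u) + \<beta> \<ge> 0" "w \<bullet> (y0 + (- t) *\<^sub>R u) + \<beta> \<ge> 0"
      using nonneg by blast+
    moreover have "\<beta> = - (w \<bullet> y0)"
      using assms(4) by simp
    ultimately show ?thesis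
      using \<open>t > 0\<close> by (auto simp: inner_add_right inner_diff_right zero_le_mult_iff mult_le_0_iff)
  qed simp
  then obtain \<mu> where "w = \<mu> *\<^sub>R a"
    using vanishes_on_orthogonal_complement_imp_parallel[OF assms(1)] by blast
  with assms(3,4) have "w \<bullet> x + \<beta> = \<mu> * (a \<bullet> x - c)" for x
    by (simp add: algebra_simps eq_neg_iff_add_eq_0 add.commute)
  then show ?thesis
    by blast
qed

lemma all_mult_nonneg_iff_same_sign:
  fixes \<mu> :: "'i \<Rightarrow> real"
  assumes "j \<in> T" "\<mu> j \<noteq> 0" "\<And>i. i \<in> T \<Longrightarrow> \<mu> i * \<mu> j \<ge> 0"
  shows "(\<forall>i\<in>T. \<mu> i * t \<ge> 0) \<longleftrightarrow> \<mu> j * t \<ge> 0"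
proof
  show "\<mu> j * t \<ge> 0" if "\<forall>i\<in>T. \<mu> i * t \<ge> 0"
    using that assms(1) by blast
next
  assume jt: "\<mu> j * t \<ge> 0"
  show "\<forall>i\<in>T. \<mu> i * t \<ge> 0"
  proof
    fix i
    assume "i \<in> T"
    have "0 \<le> (\<mu> i * \<mu> j) * (\<mu> j * t)"
      using assms(3)[OF \<open>i \<in> T\<close>] jt by (rule mult_nonneg_nonneg)
    also have "\<dots> = (\<mu> j)\<^sup>2 * (\<mu> i * t)"
      by (simp add: power2_eq_square algebra_simps)
    finally show "\<mu> i * t \<ge> 0"
      using assms(2) by (simp add: zero_le_mult_iff)
  qed
qed

lemma mem_polyhedron_of: "x \<in> polyhedron_of A b \<longleftrightarrow> (\<forall>i. A$i \<bullet> x + b$i \<ge> 0)"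
  by (simp add: polyhedron_of_def matrix_vector_mult_def inner_vec_def mult.commute)

lemma polyhedron_of_eq_Inter_halfspaces: "polyhedron_of A b = (\<Inter>i. {x. A$i \<bullet> x \<ge> - b$i})"
proof -
  have "A$i \<bullet> x + b$i \<ge> 0 \<longleftrightarrow> A$i \<bullet> x \<ge> - b$i" for x i
    by linarith
  then show ?thesis
    by (simp add: mem_polyhedron_of set_eq_iff)
qed

lemma closed_polyhedron_of: "closed (polyhedron_of A b)"
  unfolding polyhedron_of_eq_Inter_halfspaces by (intro closed_INT ballI closed_halfspace_ge)

lemma convex_polyhedron_of: "convex (polyhedron_of A b)"
  unfolding polyhedron_of_eq_Inter_halfspaces by (intro convex_INT ballI convex_halfspace_ge)

lemma polyhedron_of_locally_tight_constraints:
  fixes A :: "real^'n^'p" and b :: "real^'p"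
  assumes "y0 \<in> polyhedron_of A b"
  obtains r where "r > 0"
    "\<And>x. x \<in> ball y0 r \<Longrightarrow>
       x \<in> polyhedron_of A b \<longleftrightarrow> (\<forall>i. A$i \<bullet> y0 + b$i = 0 \<longrightarrow> A$i \<bullet> x + b$i \<ge> 0)"
proof -
  have "\<forall>\<^sub>F x in nhds y0. A$i \<bullet> y0 + b$i \<noteq> 0 \<longrightarrow> A$i \<bullet> x + b$i > 0" for i
  proof (cases "A$i \<bullet> y0 + b$i = 0")
    case False
    with assms have "A$i \<bullet> y0 + b$i > 0"
      by (auto simp: mem_polyhedron_of intro: order.not_eq_order_implies_strict)
    moreover have "((\<lambda>x. A$i \<bullet> x + b$i) \<longlongrightarrow> A$i \<bullet> y0 + b$i) (nhds y0)"
      by (intro tendsto_intros filterlim_ident)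
    ultimately show ?thesis
      by (auto dest: order_tendstoD(1) elim: eventually_mono)
  qed simp
  then have "\<forall>\<^sub>F x in nhds y0. \<forall>i. A$i \<bullet> y0 + b$i \<noteq> 0 \<longrightarrow> A$i \<bullet> x + b$i > 0"
    by (intro eventually_all_finite) auto
  then obtain r where "r > 0" "\<And>x. dist x y0 < r \<Longrightarrow> \<forall>i. A$i \<bullet> y0 + b$i \<noteq> 0 \<longrightarrow> A$i \<bullet> x + b$i > 0"
    unfolding eventually_nhds_metric by blast
  then show thesis
    by (intro that[of r]) (auto simp: mem_polyhedron_of dist_commute intro: less_imp_le)
qed

lemma facet_of_not_subset_affine_hull:
  assumes "F facet_of S"
  shows "\<not> S \<subseteq> affine hull F"
proof
  assume "S \<subseteq> affine hull F"
  then have "affine hull S \<subseteq> affine hull F"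
    by (intro hull_minimal) auto
  moreover have "affine hull F \<subseteq> affine hull S"
    using assms by (intro hull_mono) (auto simp: facet_of_def dest: face_of_imp_subset)
  ultimately have "aff_dim S = aff_dim F"
    by (metis aff_dim_affine_hull subset_antisym)
  with assms show False
    by (simp add: facet_of_def)
qed

lemma polyhedron_of_locally_cut_by_facet_hyperplane:
  fixes A :: "real^'n^'p" and b :: "real^'p"
  assumes F: "F facet_of polyhedron_of A b" and K: "a \<noteq> 0" "affine hull F = {x. a \<bullet> x = c}"
  obtains y0 r T \<mu> where "y0 \<in> F" "a \<bullet> y0 = c" "r > 0"
    "\<And>i x. i \<in> T \<Longrightarrow> A$i \<bullet> x + b$i = \<mu> i * (a \<bullet> x - c)"
    "\<And>x. x \<in> ball y0 r \<Longrightarrow> x \<in> polyhedron_of A b \<longleftrightarrow> (\<forall>i\<in>T. \<mu> i * (a \<bullet> x - c) \<ge> 0)"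
proof -
  define P where "P = polyhedron_of A b"
  have face: "F face_of P" "F \<noteq> {}"
    using F by (auto simp: facet_of_def P_def)
  then have FP: "F \<subseteq> P"
    by (simp add: face_of_imp_subset)
  obtain y0 where "y0 \<in> rel_interior F"
    using face rel_interior_eq_empty face_of_imp_convex by blast
  then obtain r0 where y0F: "y0 \<in> F" and r0: "r0 > 0" "ball y0 r0 \<inter> {x. a \<bullet> x = c} \<subseteq> F"
    unfolding mem_rel_interior_ball K(2) by blast
  have y0K: "a \<bullet> y0 = c"
    using y0F K(2) hull_subset[of F affine] by blast
  define T where "T = {i. A$i \<bullet> y0 + b$i = 0}"
  have "\<exists>\<mu>. \<forall>x. A$i \<bullet> x + b$i = \<mu> * (a \<bullet> x - c)" if "i \<in> T" for i
  proof (rule nonneg_near_point_on_hyperplane_imp_multiple[OF K(1) r0(1) y0K])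
    show "A$i \<bullet> y0 + b$i = 0"
      using that by (simp add: T_def)
    show "A$i \<bullet> x + b$i \<ge> 0" if "a \<bullet> x = c" "dist x y0 < r0" for x
    proof -
      have "x \<in> ball y0 r0 \<inter> {x. a \<bullet> x = c}"
        using that by (simp add: dist_commute)
      then have "x \<in> P"
        using r0(2) FP by blast
      then show ?thesis
        by (simp add: P_def mem_polyhedron_of)
    qed
  qed
  then obtain \<mu> where tight: "\<And>i x. i \<in> T \<Longrightarrow> A$i \<bullet> x + b$i = \<mu> i * (a \<bullet> x - c)"
    by metis
  obtain r where "r > 0" and tight_local: "\<And>x. x \<in> ball y0 r \<Longrightarrow>
      x \<in> P \<longleftrightarrow> (\<forall>i. A$i \<bullet> y0 + b$i = 0 \<longrightarrow> A$i \<bullet> x + b$i \<ge> 0)"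
    using polyhedron_of_locally_tight_constraints[of y0 A b] y0F FP unfolding P_def by blast
  have "x \<in> P \<longleftrightarrow> (\<forall>i\<in>T. \<mu> i * (a \<bullet> x - c) \<ge> 0)" if "x \<in> ball y0 r" for x
    using tight_local[OF that] tight[unfolded T_def mem_Collect_eq] by (simp add: T_def)
  with y0F y0K \<open>r > 0\<close> tight show thesis
    unfolding P_def by (rule that)
qed

lemma polyhedron_of_locally_halfspace_at_facet:
  fixes A :: "real^'n^'p" and b :: "real^'p"
  assumes F: "F facet_of polyhedron_of A b" "F \<subseteq> frontier (polyhedron_of A b)"
    and K: "a \<noteq> 0" "affine hull F = {x. a \<bullet> x = c}"
  obtains y0 r \<sigma> where "r > 0" "a \<bullet> y0 = c" "\<sigma> \<noteq> 0"
    "\<And>x. x \<in> ball y0 r \<Longrightarrow> x \<in> polyhedron_of A b \<longleftrightarrow> \<sigma> * (a \<bullet> x - c) \<ge> 0"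
proof -
  define P where "P = polyhedron_of A b"
  obtain y0 r T \<mu> where y0: "y0 \<in> F" "a \<bullet> y0 = c" "r > 0"
    and tight: "\<And>i x. i \<in> T \<Longrightarrow> A$i \<bullet> x + b$i = \<mu> i * (a \<bullet> x - c)"
    and local: "\<And>x. x \<in> ball y0 r \<Longrightarrow> x \<in> P \<longleftrightarrow> (\<forall>i\<in>T. \<mu> i * (a \<bullet> x - c) \<ge> 0)"
    using polyhedron_of_locally_cut_by_facet_hyperplane[OF F(1) K] unfolding P_def by blast
  obtain j where j: "j \<in> T" "\<mu> j \<noteq> 0"
  proof -
    have "\<not> ball y0 r \<subseteq> P"
    proof
      assume "ball y0 r \<subseteq> P"
      then have "y0 \<in> interior P"
        using y0(3) by (meson centre_in_ball interiorI open_ball)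
      with y0(1) F(2) show False
        by (auto simp: P_def frontier_def)
    qed
    then show thesis
      using local that by fastforce
  qed
  have "\<mu> i * \<mu> j \<ge> 0" if "i \<in> T" for i
  proof (rule ccontr)
    assume opposite: "\<not> \<mu> i * \<mu> j \<ge> 0"
    have "P \<subseteq> {x. a \<bullet> x = c}"
    proof
      fix x
      assume "x \<in> P"
      then have "A$i \<bullet> x + b$i \<ge> 0" "A$j \<bullet> x + b$j \<ge> 0"
        by (simp_all add: P_def mem_polyhedron_of)
      then have "\<mu> i * (a \<bullet> x - c) \<ge> 0" "\<mu> j * (a \<bullet> x - c) \<ge> 0"
        unfolding tight[OF that] tight[OF j(1)] .
      with opposite show "x \<in> {x. a \<bullet> x = c}"
        by (auto simp: zero_le_mult_iff mult_le_0_iff)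
    qed
    with facet_of_not_subset_affine_hull[OF F(1)] show False
      by (simp add: K(2) P_def)
  qed
  with local j show thesis
    by (intro that[OF y0(3,2) j(2)]) (simp add: P_def all_mult_nonneg_iff_same_sign)
qed

lemma eventually_central_difference_indicator_across_facet:
  fixes A :: "real^'n^'p" and b :: "real^'p"
  assumes "F facet_of polyhedron_of A b" "F \<subseteq> frontier (polyhedron_of A b)"
    and "a \<noteq> 0" "affine hull F = {x. a \<bullet> x = c}"
  obtains y0 e where "e > 0" "y0 \<in> polyhedron_of A b" "a \<bullet> y0 = c"
    "\<And>y. a \<bullet> y = c \<Longrightarrow> dist y y0 < e \<Longrightarrow>
       \<forall>\<^sub>F \<epsilon> in at_right 0. central_difference (indicator (polyhedron_of A b)) y a \<epsilon> \<noteq> 0"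
proof -
  define P where "P = polyhedron_of A b"
  obtain y0 r \<sigma> where r: "r > 0" "a \<bullet> y0 = c" "\<sigma> \<noteq> 0"
    and local: "\<And>x. x \<in> ball y0 r \<Longrightarrow> x \<in> P \<longleftrightarrow> \<sigma> * (a \<bullet> x - c) \<ge> 0"
    using polyhedron_of_locally_halfspace_at_facet[OF assms] unfolding P_def by blast
  have "y0 \<in> P"
    using local[of y0] r by simp
  moreover have "\<forall>\<^sub>F \<epsilon> in at_right 0. central_difference (indicator P) y a \<epsilon> \<noteq> 0"
    if "a \<bullet> y = c" "dist y y0 < r / 2" for y
  proof -
    have "((\<lambda>\<epsilon>. \<epsilon> * norm a) \<longlongrightarrow> 0) (at_right 0)"
      by (auto intro!: tendsto_eq_intros)
    then have "\<forall>\<^sub>F \<epsilon> in at_right 0. \<epsilon> * norm a < r / 2"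
      using r(1) by (intro order_tendstoD(2)) auto
    then have "\<forall>\<^sub>F \<epsilon> in at_right 0. \<epsilon> > 0 \<and> \<epsilon> * norm a < r / 2"
      using eventually_at_right_less[of 0] by eventually_elim auto
    then show ?thesis
    proof eventually_elim
      case (elim \<epsilon>)
      have "dist y (y + \<epsilon> *\<^sub>R a) = \<epsilon> * norm a" "dist y (y - \<epsilon> *\<^sub>R a) = \<epsilon> * norm a"
        using elim by (simp_all add: dist_norm)
      then have "dist y0 (y + \<epsilon> *\<^sub>R a) \<le> dist y0 y + \<epsilon> * norm a"
        "dist y0 (y - \<epsilon> *\<^sub>R a) \<le> dist y0 y + \<epsilon> * norm a"
        using dist_triangle[of y0 _ y] by metis+
      then have "y + \<epsilon> *\<^sub>R a \<in> ball y0 r" "y - \<epsilon> *\<^sub>R a \<in> ball y0 r"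
        using elim that(2) by (simp_all add: dist_commute)
      moreover have "a \<bullet> (y + \<epsilon> *\<^sub>R a) - c = \<epsilon> * (a \<bullet> a)" "a \<bullet> (y - \<epsilon> *\<^sub>R a) - c = - (\<epsilon> * (a \<bullet> a))"
        using that(1) by (simp_all add: inner_add_right inner_diff_right)
      moreover have "\<epsilon> * (a \<bullet> a) > 0"
        using elim assms(3) by simp
      ultimately have "(y + \<epsilon> *\<^sub>R a \<in> P) \<noteq> (y - \<epsilon> *\<^sub>R a \<in> P)"
        using local r(3) by (auto simp: zero_le_mult_iff mult_le_0_iff)
      then show ?case
        by (simp add: central_difference_def indicator_def)
    qed
  qed
  ultimately show thesis
    using r by (intro that[of "r / 2" y0]) (auto simp: P_def)
qed

lemma hyperplane_not_subset_polyhedron_of: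
  fixes A :: "real^'n^'p" and b :: "real^'p"
  assumes "a1 \<noteq> 0" "F face_of polyhedron_of A b" "F \<noteq> {}"
    and "affine hull F = {x. a2 \<bullet> x = c2}" "\<nexists>k. a2 = k *\<^sub>R a1"
  shows "\<not> {x. a1 \<bullet> x = c1} \<subseteq> polyhedron_of A b"
proof
  assume K: "{x. a1 \<bullet> x = c1} \<subseteq> polyhedron_of A b"
  obtain d where d: "a1 \<bullet> d = 0" "a2 \<bullet> d \<noteq> 0"
    using vanishes_on_orthogonal_complement_imp_parallel[OF assms(1), of a2] assms(5) by blast
  \<comment> \<open>Every constraint is then constant along d, so the face F is invariant under translation
     by d, contradicting a2 \<bullet> d \<noteq> 0.\<close>
  define k where "k = (c1 / (a1 \<bullet> a1)) *\<^sub>R a1"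
  have "a1 \<bullet> a1 \<noteq> 0"
    using assms(1) by simp
  then have k: "a1 \<bullet> (k + t *\<^sub>R d) = c1" for t
    using d(1) by (simp add: k_def inner_add_right)
  have Ad: "A$i \<bullet> d = 0" for i
  proof (rule ccontr)
    assume nz: "A$i \<bullet> d \<noteq> 0"
    define t where "t = - (A$i \<bullet> k + b$i + 1) / (A$i \<bullet> d)"
    have "A$i \<bullet> (k + t *\<^sub>R d) + b$i \<ge> 0"
      using K k[of t] by (auto simp: mem_polyhedron_of)
    moreover have "A$i \<bullet> (k + t *\<^sub>R d) + b$i = -1"
      using nz by (simp add: t_def inner_add_right)
    ultimately show False
      by simp
  qed
  obtain q where q: "q \<in> F"
    using assms(3) by blast
  then have "q \<in> polyhedron_of A b"
    using assms(2) face_of_imp_subset by blast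
  then have "q - d \<in> polyhedron_of A b" "q + d \<in> polyhedron_of A b"
    using Ad by (auto simp: mem_polyhedron_of inner_diff_right inner_add_right)
  moreover have "q \<in> open_segment (q - d) (q + d)"
  proof -
    have "q - d \<noteq> q + d"
    proof
      assume "q - d = q + d"
      then have "2 *\<^sub>R d = 0"
        by (metis add.right_inverse add_left_cancel diff_conv_add_uminus scaleR_2)
      with d(2) show False
        by simp
    qed
    moreover have "midpoint (q - d) (q + d) = q"
      by (simp add: midpoint_def scaleR_add_right[symmetric])
    ultimately show ?thesis
      using midpoint_in_open_segment by metis
  qed
  ultimately have "q - d \<in> F" "q + d \<in> F"
    using face_ofD[OF assms(2)] q by blast+
  then have "a2 \<bullet> (q - d) = c2" "a2 \<bullet> (q + d) = c2"
    using assms(4) hull_subset[of F affine] by auto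
  with d(2) show False
    by (simp add: inner_add_right inner_diff_right)
qed

lemma eventually_central_difference_indicator_beyond_exit:
  fixes S :: "'a::real_normed_vector set"
  assumes "convex S" "closed S" "y0 \<in> S" "y1 \<notin> S" "s \<ge> 1"
  shows "\<forall>\<^sub>F \<epsilon> in at_right 0. central_difference (indicator S) (y0 + s *\<^sub>R (y1 - y0)) a \<epsilon> = 0"
proof -
  define z where "z = y0 + s *\<^sub>R (y1 - y0)"
  have "(1 / s) *\<^sub>R z = (1 / s) *\<^sub>R y0 + (y1 - y0)"
    using assms(5) by (simp add: z_def scaleR_add_right)
  then have "y1 = (1 - 1 / s) *\<^sub>R y0 + (1 / s) *\<^sub>R z"
    by (simp add: algebra_simps)
  then have "z \<notin> S"
    using convexD[OF assms(1,3), of z "1 - 1 / s" "1 / s"] assms(4,5) by auto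
  moreover have "open (- S)"
    using assms(2) by (simp add: open_Compl)
  ultimately have outside: "\<forall>\<^sub>F x in nhds z. x \<notin> S"
    using eventually_nhds_in_open[of "- S" z] by simp
  have "((\<lambda>\<epsilon>. z + \<epsilon> *\<^sub>R a) \<longlongrightarrow> z) (at_right 0)" "((\<lambda>\<epsilon>. z - \<epsilon> *\<^sub>R a) \<longlongrightarrow> z) (at_right 0)"
    by (auto intro!: tendsto_eq_intros)
  then have "\<forall>\<^sub>F \<epsilon> in at_right 0. z + \<epsilon> *\<^sub>R a \<notin> S \<and> z - \<epsilon> *\<^sub>R a \<notin> S"
    using eventually_compose_filterlim[OF outside] eventually_conj by blast
  then show ?thesis
    by (rule eventually_mono) (simp add: z_def central_difference_def)
qed

lemma indicator_central_difference_not_cofinitely_const: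
  fixes S :: "'a::real_inner set"
  assumes S: "convex S" "closed S" "y0 \<in> S" "y1 \<notin> S"
    and K: "a \<bullet> y0 = c" "a \<bullet> y1 = c"
    and jumps: "e > 0" "\<And>y. a \<bullet> y = c \<Longrightarrow> dist y y0 < e \<Longrightarrow>
                  \<forall>\<^sub>F \<epsilon> in at_right 0. central_difference (indicator S) y a \<epsilon> \<noteq> 0"
  shows "\<not> (\<forall>\<^sub>F s in cofinite. \<forall>\<^sub>F \<epsilon> in at_right 0.
              central_difference (indicator S) (y0 + s *\<^sub>R (y1 - y0)) a \<epsilon> = C)"
proof
  assume const: "\<forall>\<^sub>F s in cofinite. \<forall>\<^sub>F \<epsilon> in at_right 0.
                   central_difference (indicator S) (y0 + s *\<^sub>R (y1 - y0)) a \<epsilon> = C"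
  have on_K: "a \<bullet> (y0 + s *\<^sub>R (y1 - y0)) = c" for s
    using K by (simp add: inner_add_right inner_diff_right)
  have "((\<lambda>s. y0 + s *\<^sub>R (y1 - y0)) \<longlongrightarrow> y0) (at_right 0)"
    by (auto intro!: tendsto_eq_intros)
  then have "\<forall>\<^sub>F s in at_right 0. dist (y0 + s *\<^sub>R (y1 - y0)) y0 < e"
    using jumps(1) tendstoD by blast
  then have "\<forall>\<^sub>F s in at_right (0::real). C \<noteq> 0"
    using eventually_at_within_if_eventually_cofinite[OF const]
  proof eventually_elim
    case (elim s)
    from jumps(2)[OF on_K elim(1)] elim(2) have "\<forall>\<^sub>F \<epsilon> in at_right (0::real). C \<noteq> 0"
      by eventually_elim auto
    then show ?case
      by simp
  qed
  moreover have "\<forall>\<^sub>F s in at_right (1::real). C = 0"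
    using eventually_at_within_if_eventually_cofinite[OF const] eventually_at_right_less[of 1]
  proof eventually_elim
    case (elim s)
    from eventually_central_difference_indicator_beyond_exit[OF S less_imp_le[OF elim(2)]] elim(1)
    have "\<forall>\<^sub>F \<epsilon> in at_right (0::real). C = 0"
      by eventually_elim auto
    then show ?case
      by simp
  qed
  ultimately show False
    by simp
qed

theorem lemmaB7:
  fixes A :: "real^'n^'p" and b :: "real^'p"
  assumes "has_two_nonparallel_boundaries (polyhedron_of A b)"
  shows "\<not> snn_T1L1_spike_realizable (indicator (polyhedron_of A b) :: real^'n \<Rightarrow> real)
       \<and> \<not> snn_T1L1_membrane_realizable (indicator (polyhedron_of A b) :: real^'n \<Rightarrow> real)"
proof -
  define P where "P = polyhedron_of A b"
  obtain F1 F2 a1 c1 a2 c2 where F1: "F1 facet_of P" "F1 \<subseteq> frontier P" "a1 \<noteq> 0"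
      "affine hull F1 = {x. a1 \<bullet> x = c1}"
    and F2: "F2 facet_of P" "affine hull F2 = {x. a2 \<bullet> x = c2}" "\<nexists>k. a2 = k *\<^sub>R a1"
    using assms unfolding has_two_nonparallel_boundaries_def P_def by blast
  obtain y0 e where y0: "e > 0" "y0 \<in> P" "a1 \<bullet> y0 = c1"
    and jumps: "\<And>y. a1 \<bullet> y = c1 \<Longrightarrow> dist y y0 < e \<Longrightarrow>
                  \<forall>\<^sub>F \<epsilon> in at_right 0. central_difference (indicator P) y a1 \<epsilon> \<noteq> 0"
    using eventually_central_difference_indicator_across_facet[OF F1[unfolded P_def]]
    unfolding P_def by blast
  obtain y1 where y1: "a1 \<bullet> y1 = c1" "y1 \<notin> P"
    using hyperplane_not_subset_polyhedron_of[OF F1(3), of F2 A b a2 c2 c1] F2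
    by (auto simp: P_def facet_of_def)
  have "convex P" "closed P"
    by (simp_all add: P_def convex_polyhedron_of closed_polyhedron_of)
  then have membrane: "\<not> snn_T1L1_membrane_realizable (indicator P :: real^'n \<Rightarrow> real)"
    using membrane_realizable_central_difference_const[of "indicator P" y0 "y1 - y0" a1]
      indicator_central_difference_not_cofinitely_const[of P y0 y1 a1 c1 e] y0 y1 jumps
    by blast
  then have "\<not> snn_T1L1_spike_realizable (indicator P :: real^'n \<Rightarrow> real)"
    using spike_realizable_imp_membrane_realizable by blast
  with membrane show ?thesis
    by (simp add: P_def)
qed

end
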